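(* Let $m_1,m_2,m_3>0$ and let $q_1,q_2,q_3$ be a choreographic solution of $$\ddot q_k=\sum_{j=1,\,j\neq k}^{3} m_j (q_j-q_k)\, f\!\left(\|q_j-q_k\|^2\right),\qquad k\in\{1,2,3\},$$ where $f:\mathbb{R}_{>0}\to\mathbb{R}_{>0}$ is positive and $\sqrt{x}\,f(x)$ is decreasing. If the curve along which the masses move has an axis of symmetry, then $m_1=m_2=m_3$.
   Context: A choreographic solution is one for which there exist a twice continuously differentiable periodic function $p$ and constants $h_1,h_2,h_3$ with $q_k(t)=p(t+h_k)$. The axis of symmetry hypothesis is understood, as in the paper, as: the curve lies in the plane and (after choice of coordinates and time origin) $p(-t)=\begin{pmatrix}1&0\\0&-1\end{pmatrix}p(t)$ for all $t$. The center of mass is assumed at the origin: $\sum_k m_k q_k=0$. *)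

theory Defs
  imports "HOL-Analysis.Analysis"
begin

definition refl_axis :: "real^2 \<Rightarrow> real^2" where
  "refl_axis x = (\<chi> i. if i = 1 then x $ 1 else - (x $ i))"

definition C2_periodic :: "(real \<Rightarrow> real^2) \<Rightarrow> bool" where
  "C2_periodic p \<longleftrightarrow>
     (\<exists>p' p'' T. T > 0 \<and> (\<forall>t. p (t + T) = p t) \<and>
        (\<forall>t. (p has_vector_derivative p' t) (at t)) \<and>
        (\<forall>t. (p' has_vector_derivative p'' t) (at t)) \<and>
        continuous_on UNIV p'')"

text \<open>The curve traced by p has an axis of symmetry: after a choice of
  (Euclidean) coordinates, i.e. an isometry g of the plane, and of the time origin s,
  the curve P(t) = g(p(t+s)) satisfies P(-t) = diag(1,-1) P(t).\<close>
definition axis_symmetric :: "(real \<Rightarrow> real^2) \<Rightarrow> bool" where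
  "axis_symmetric p \<longleftrightarrow>
     (\<exists>g :: real^2 \<Rightarrow> real^2. \<exists>s. (\<forall>x y. dist (g x) (g y) = dist x y) \<and>
        (\<forall>t. g (p (- t + s)) = refl_axis (g (p (t + s)))))"

definition choreographic :: "(nat \<Rightarrow> real \<Rightarrow> real^2) \<Rightarrow> (real \<Rightarrow> real^2) \<Rightarrow> bool" where
  "choreographic q p \<longleftrightarrow> C2_periodic p \<and>
     (\<exists>h :: nat \<Rightarrow> real. \<forall>k\<in>{1,2,3}. \<forall>t. q k t = p (t + h k))"

end

theory Submission
  imports Defs "HOL-Library.Periodic_Fun"
begin

(* Reflecting in the axis and reversing time turns the choreography into the same choreography
   with opposite phases.  Hence, at every instant, the centre of mass relation and Newton's
   equation can each be read off from every body in two ways, and subtracting two readings gives,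
   for each triangle of chords u, v, w, a relation mu (u - w) = kappa v holding both for the chords
   and for the forces F(|x|^2) x, with kappa a difference of masses.  Since r F(r^2) decreases,
   this forces |u| = |v| = |w| or u, w antiparallel with |u|, |v|, |w| distinct.  If the masses
   are pairwise distinct, going around the six chords forces all of them to have equal length:
   the triangle is equilateral at all times, and then comparing the distance from the centre of
   mass seen from two bodies gives equal masses.  If exactly two masses agree, the instants at
   which three suitable chords have equal length and those at which two of them are collinear
   split the real line into two disjoint closed sets, the first of them nonempty, and the same
   conclusion follows. *)

lemma linear_refl_axis: "linear refl_axis"
  by (intro linearI) (simp_all add: refl_axis_def vec_eq_iff)

lemma refl_axis_refl_axis [simp]: "refl_axis (refl_axis x) = x"
  by (simp add: refl_axis_def vec_eq_iff)

lemma norm_refl_axis [simp]: "norm (refl_axis x) = norm x"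
  by (simp add: refl_axis_def norm_eq_sqrt_inner inner_vec_def sum_2)

lemma has_vector_derivative_affine_reparam:
  assumes "\<And>t. (f has_vector_derivative f' t) (at t)"
  shows "((\<lambda>t. f (a * t + b)) has_vector_derivative a *\<^sub>R f' (a * t + b)) (at t)"
proof -
  have "((\<lambda>t. a * t + b) has_vector_derivative a) (at t)"
    by (auto intro!: derivative_eq_intros simp: has_real_derivative_iff_has_vector_derivative[symmetric])
  from vector_diff_chain_at[OF this assms] show ?thesis
    by (simp add: o_def)
qed

lemma has_vector_derivative_linear_shift:
  assumes "\<And>t. (f has_vector_derivative f' t) (at t)" and "bounded_linear L"
  shows "((\<lambda>t. L (f (t + s))) has_vector_derivative L (f' (t + s))) (at t)"
  using bounded_linear.has_vector_derivative[OF \<open>bounded_linear L\<close>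
      has_vector_derivative_affine_reparam[OF assms(1), of 1 s t]]
  by simp

lemma derivative_reflection_symmetric:
  assumes "\<And>t. (f has_vector_derivative f' t) (at t)" and "\<And>t. f (- t) = L (f t)" and "bounded_linear L"
  shows "f' (- t) = - L (f' t)"
proof -
  have "((\<lambda>t. f (- t)) has_vector_derivative - f' (- t)) (at t)"
    using has_vector_derivative_affine_reparam[OF assms(1), of "-1" 0 t] by simp
  moreover have "((\<lambda>t. L (f t)) has_vector_derivative L (f' t)) (at t)"
    using bounded_linear.has_vector_derivative[OF \<open>bounded_linear L\<close> assms(1)] .
  ultimately have "- f' (- t) = L (f' t)"
    using vector_derivative_unique_at assms(2) by fastforce
  then show ?thesis by (simp add: minus_equation_iff)
qed

lemma second_derivative_reflection_symmetric:
  assumes "\<And>t. (f has_vector_derivative f' t) (at t)" and "\<And>t. (f' has_vector_derivative f'' t) (at t)"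
    and "\<And>t. f (- t) = R (f t)" and "bounded_linear R"
  shows "f'' (- t) = R (f'' t)"
proof -
  have "f' (- t) = - R (f' t)" for t
    by (rule derivative_reflection_symmetric[OF assms(1,3,4)])
  from derivative_reflection_symmetric[where L = "\<lambda>x. - R x", OF assms(2) this]
  show ?thesis using \<open>bounded_linear R\<close> by (simp add: bounded_linear_minus)
qed

lemma continuous_periodic_attains_bounds:
  fixes g :: "real \<Rightarrow> real"
  assumes "continuous_on UNIV g" and "0 < T" and "\<And>t. g (t + T) = g t"
  obtains s1 s2 where "\<And>s. g s \<le> g s1" and "\<And>s. g s2 \<le> g s"
proof -
  interpret periodic_fun_simple g T by unfold_locales (rule assms(3))
  have "g ` UNIV = g ` {0..T}"
  proof (intro antisym subsetI)
    fix y assume "y \<in> g ` UNIV"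
    then obtain s where "y = g s" by blast
    define n where "n = \<lfloor>s / T\<rfloor>"
    have "real_of_int n * T \<le> s" "s < (real_of_int n + 1) * T"
      using \<open>0 < T\<close> unfolding n_def
      by (simp_all add: pos_le_divide_eq[symmetric] pos_divide_less_eq[symmetric])
    then have "s - real_of_int n * T \<in> {0..T}" by (simp add: algebra_simps)
    moreover have "y = g (s - real_of_int n * T)"
      using minus_of_int[of s n] \<open>y = g s\<close> by simp
    ultimately show "y \<in> g ` {0..T}" by blast
  qed auto
  moreover have "compact (g ` {0..T})" "g ` {0..T} \<noteq> {}"
    using assms(1,2) by (auto intro: compact_continuous_image continuous_on_subset)
  ultimately obtain y1 y2 where "y1 \<in> g ` UNIV" "y2 \<in> g ` UNIV" "\<forall>y\<in>g ` UNIV. y \<le> y1 \<and> y2 \<le> y"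
    using compact_attains_sup[of "g ` {0..T}"] compact_attains_inf[of "g ` {0..T}"] by metis
  then show ?thesis using that by blast
qed

lemma continuous_periodic_shift_meets:
  fixes g :: "real \<Rightarrow> real"
  assumes "continuous_on UNIV g" and "0 < T" and "\<And>t. g (t + T) = g t"
  shows "\<exists>s. g (s + a) = g s"
proof -
  obtain s1 s2 where max: "\<And>s. g s \<le> g s1" and min: "\<And>s. g s2 \<le> g s"
    using continuous_periodic_attains_bounds[OF assms] by blast
  define d where "d s = g (s + a) - g s" for s
  have "continuous_on UNIV d"
    unfolding d_def by (intro continuous_intros continuous_on_compose2[OF assms(1)]) auto
  then have "connected (d ` UNIV)" by (rule connected_continuous_image) simp
  moreover have "d s1 \<le> 0" "0 \<le> d s2" using max min by (simp_all add: d_def)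
  ultimately have "0 \<in> d ` UNIV" unfolding connected_iff_interval by blast
  then show ?thesis by (auto simp: d_def)
qed

definition central_force :: "(real \<Rightarrow> real) \<Rightarrow> 'a::real_normed_vector \<Rightarrow> 'a" where
  "central_force F x = F ((norm x)\<^sup>2) *\<^sub>R x"

lemma central_force_linear_isometry:
  assumes "linear L" and "\<And>x. norm (L x) = norm x"
  shows "central_force F (L x) = L (central_force F x)"
  using assms by (simp add: central_force_def linear_scale)

definition norms_equal_or_aligned :: "'a::real_normed_vector \<Rightarrow> 'a \<Rightarrow> 'a \<Rightarrow> bool" where
  "norms_equal_or_aligned u v w \<longleftrightarrow>
     (norm u = norm v \<and> norm v = norm w) \<or>
     ((\<exists>l<0. u = l *\<^sub>R w) \<and> (\<exists>l. v = l *\<^sub>R w) \<and>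
      norm u \<noteq> norm v \<and> norm v \<noteq> norm w \<and> norm u \<noteq> norm w)"

(* The aligned alternative cannot hold for all of (x0, x2), (x2, x4), (x4, x0), as it would give
   x0 = l x0 with l < 0; and consecutive triples share two vectors. *)
lemma norms_equal_around_hexagon:
  assumes "norms_equal_or_aligned x0 x1 x2" "norms_equal_or_aligned x1 x2 x3"
    "norms_equal_or_aligned x2 x3 x4" "norms_equal_or_aligned x3 x4 x5"
    "norms_equal_or_aligned x4 x5 x0" "norms_equal_or_aligned x5 x0 x1" and "x0 \<noteq> 0"
  shows "norm x0 = norm x1 \<and> norm x1 = norm x2 \<and> norm x2 = norm x3 \<and> norm x3 = norm x4
    \<and> norm x4 = norm x5"
proof -
  have "\<not> ((\<exists>l<0. x0 = l *\<^sub>R x2) \<and> (\<exists>l<0. x2 = l *\<^sub>R x4) \<and> (\<exists>l<0. x4 = l *\<^sub>R x0))"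
  proof
    assume "(\<exists>l<0. x0 = l *\<^sub>R x2) \<and> (\<exists>l<0. x2 = l *\<^sub>R x4) \<and> (\<exists>l<0. x4 = l *\<^sub>R x0)"
    then obtain l1 l2 l3 :: real where "l1 < 0" "l2 < 0" "l3 < 0" and "x0 = (l1 * l2 * l3) *\<^sub>R x0"
      by (metis scaleR_scaleR)
    then have "l1 * l2 * l3 = 1"
      using \<open>x0 \<noteq> 0\<close> by (metis scaleR_cancel_right scaleR_one)
    moreover have "l1 * l2 * l3 < 0"
      using \<open>l1 < 0\<close> \<open>l2 < 0\<close> \<open>l3 < 0\<close> by (simp add: mult_less_0_iff zero_less_mult_iff)
    ultimately show False by simp
  qed
  then show ?thesis
    using assms(1-6) unfolding norms_equal_or_aligned_def by metis
qed

locale force_law =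
  fixes F :: "real \<Rightarrow> real"
  assumes F_pos: "0 < x \<Longrightarrow> 0 < F x"
    and sqrt_mult_F_decreasing: "0 < x \<Longrightarrow> x < y \<Longrightarrow> sqrt y * F y < sqrt x * F x"
begin

lemma F_decreasing:
  assumes "0 < x" "x < y"
  shows "F y < F x"
proof -
  have "sqrt x * F y < sqrt y * F y" using assms F_pos[of y] by simp
  also have "\<dots> < sqrt x * F x" using assms by (rule sqrt_mult_F_decreasing)
  finally show ?thesis using assms by simp
qed

lemma F_eq_iff:
  assumes "0 < x" "0 < y"
  shows "F x = F y \<longleftrightarrow> x = y"
  using F_decreasing[of x y] F_decreasing[of y x] assms by (cases x y rule: linorder_cases) auto

lemma norm_force_decreasing:
  assumes "0 < r" "r < s"
  shows "s * F (s\<^sup>2) < r * F (r\<^sup>2)"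
  using sqrt_mult_F_decreasing[of "r\<^sup>2" "s\<^sup>2"] assms by (simp add: power_strict_mono)

(* Since r F(r^2) decreases in r, the two sides have opposite signs. *)
lemma force_difference_sign:
  assumes "0 < a" "0 < b" "a \<noteq> b" "0 < \<gamma>"
  shows "a * F (a\<^sup>2) - b * F (b\<^sup>2) \<noteq> \<gamma> * (a - b)"
proof -
  have "\<gamma> * (a - b) < 0 \<and> 0 < a * F (a\<^sup>2) - b * F (b\<^sup>2) \<or>
        0 < \<gamma> * (a - b) \<and> a * F (a\<^sup>2) - b * F (b\<^sup>2) < 0"
    using norm_force_decreasing[of a b] norm_force_decreasing[of b a] assms
    by (cases a b rule: linorder_cases) (simp_all add: mult_pos_neg)
  then show ?thesis by linarith
qed

lemma scaled_forces_not_positively_parallel: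
  assumes forces: "(F ((norm u)\<^sup>2) - \<phi>) *\<^sub>R u = (F ((norm w)\<^sup>2) - \<phi>) *\<^sub>R w"
    and "0 < \<phi>" "u \<noteq> w" "w \<noteq> 0" "0 < l"
  shows "u \<noteq> l *\<^sub>R w"
proof
  assume u: "u = l *\<^sub>R w"
  have "((F ((norm u)\<^sup>2) - \<phi>) * l) *\<^sub>R w = (F ((norm w)\<^sup>2) - \<phi>) *\<^sub>R w"
    using forces by (simp add: u)
  then have "(F ((norm u)\<^sup>2) - \<phi>) * l = F ((norm w)\<^sup>2) - \<phi>"
    using \<open>w \<noteq> 0\<close> by (simp add: scaleR_cancel_right)
  moreover have "norm u = l * norm w" using u \<open>0 < l\<close> by simp
  ultimately have "norm u * (F ((norm u)\<^sup>2) - \<phi>) = norm w * (F ((norm w)\<^sup>2) - \<phi>)"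
    by (metis mult.assoc mult.commute)
  then have "norm u * F ((norm u)\<^sup>2) - norm w * F ((norm w)\<^sup>2) = \<phi> * (norm u - norm w)"
    by (simp add: algebra_simps)
  moreover have "norm u \<noteq> norm w" using u \<open>u \<noteq> w\<close> \<open>0 < l\<close> by auto
  ultimately show False
    using force_difference_sign[of "norm u" "norm w" \<phi>] \<open>0 < \<phi>\<close> \<open>0 < l\<close> \<open>w \<noteq> 0\<close> u by simp
qed

lemma balanced_forces_norms_equal_or_aligned:
  fixes u v w :: "'a::real_normed_vector"
  assumes "u \<noteq> 0" "v \<noteq> 0" "w \<noteq> 0" "\<mu> \<noteq> 0" "\<kappa> \<noteq> 0"
    and chords: "\<mu> *\<^sub>R (u - w) = \<kappa> *\<^sub>R v"
    and forces: "\<mu> *\<^sub>R (central_force F u - central_force F w) = \<kappa> *\<^sub>R central_force F v"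
  shows "norms_equal_or_aligned u v w"
proof -
  define fu fv fw where "fu = F ((norm u)\<^sup>2)" and "fv = F ((norm v)\<^sup>2)" and "fw = F ((norm w)\<^sup>2)"
  have "\<mu> *\<^sub>R (fu *\<^sub>R u - fw *\<^sub>R w) = \<kappa> *\<^sub>R (fv *\<^sub>R v)"
    using forces by (simp only: central_force_def fu_def fv_def fw_def)
  also have "\<dots> = fv *\<^sub>R (\<mu> *\<^sub>R (u - w))" by (simp only: scaleR_left_commute chords)
  also have "\<dots> = \<mu> *\<^sub>R (fv *\<^sub>R (u - w))" by (rule scaleR_left_commute)
  finally have "fu *\<^sub>R u - fw *\<^sub>R w = fv *\<^sub>R (u - w)"
    using \<open>\<mu> \<noteq> 0\<close> by (metis scaleR_cancel_left)
  then have key: "(fu - fv) *\<^sub>R u = (fw - fv) *\<^sub>R w"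
    by (simp add: algebra_simps)
  show ?thesis
  proof (cases "fu = fv")
    case True
    then have "fw = fv" using key \<open>w \<noteq> 0\<close> by simp
    with True have "(norm u)\<^sup>2 = (norm v)\<^sup>2" "(norm w)\<^sup>2 = (norm v)\<^sup>2"
      using F_eq_iff assms(1-3) by (auto simp: fu_def fv_def fw_def)
    then show ?thesis by (simp add: norms_equal_or_aligned_def power2_eq_iff_nonneg)
  next
    case False
    define l where "l = (fw - fv) / (fu - fv)"
    have "u = inverse (fu - fv) *\<^sub>R ((fu - fv) *\<^sub>R u)" using False by simp
    then have u: "u = l *\<^sub>R w" by (simp add: key l_def divide_inverse mult.commute)
    have "u \<noteq> w" using chords \<open>v \<noteq> 0\<close> \<open>\<kappa> \<noteq> 0\<close> by auto
    moreover have "0 < fv" using F_pos \<open>v \<noteq> 0\<close> by (simp add: fv_def)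
    ultimately have "\<not> 0 < l"
      using scaled_forces_not_positively_parallel[OF key[unfolded fu_def fw_def]] \<open>w \<noteq> 0\<close> u
      by blast
    moreover have "l \<noteq> 0" using u \<open>u \<noteq> 0\<close> by auto
    ultimately have "l < 0" by simp
    have "\<kappa> *\<^sub>R v = (\<mu> * (l - 1)) *\<^sub>R w" using chords u by (simp add: algebra_simps)
    moreover have "v = inverse \<kappa> *\<^sub>R (\<kappa> *\<^sub>R v)" using \<open>\<kappa> \<noteq> 0\<close> by simp
    ultimately have v: "v = (inverse \<kappa> * (\<mu> * (l - 1))) *\<^sub>R w" by simp
    have "fw - fv = l * (fu - fv)" "fw - fu = (l - 1) * (fu - fv)"
      using False by (simp_all add: l_def field_simps)
    then have "fu \<noteq> fv" "fv \<noteq> fw" "fu \<noteq> fw" using False \<open>l < 0\<close> by auto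
    then have "norm u \<noteq> norm v" "norm v \<noteq> norm w" "norm u \<noteq> norm w"
      by (auto simp: fu_def fv_def fw_def)
    then show ?thesis
      using u v \<open>l < 0\<close> unfolding norms_equal_or_aligned_def by blast
  qed
qed

end

(* When body k is at P s, body j is at P (s + (H j - H k)): chord P s (H j - H k) points from
   body k to body j. *)
definition chord :: "(real \<Rightarrow> 'a::real_vector) \<Rightarrow> real \<Rightarrow> real \<Rightarrow> 'a" where
  "chord P s d = P (s + d) - P s"

lemma norm_combination_equilateral:
  fixes x y :: "'a::real_inner"
  assumes "norm y = norm x" and "norm (y - x) = norm x"
  shows "(norm (p *\<^sub>R x + q *\<^sub>R y))\<^sup>2 = (norm x)\<^sup>2 * (p\<^sup>2 + q\<^sup>2 + p * q)"
proof -
  have "(norm (y - x))\<^sup>2 = (norm y)\<^sup>2 - 2 * (x \<bullet> y) + (norm x)\<^sup>2"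
    by (simp add: power2_norm_eq_inner inner_diff_left inner_diff_right inner_commute)
  then have "x \<bullet> y = (norm x)\<^sup>2 / 2" using assms by simp
  have "(norm (p *\<^sub>R x + q *\<^sub>R y))\<^sup>2 = (p *\<^sub>R x + q *\<^sub>R y) \<bullet> (p *\<^sub>R x + q *\<^sub>R y)"
    by (rule power2_norm_eq_inner)
  also have "\<dots> = p\<^sup>2 * (x \<bullet> x) + 2 * p * q * (x \<bullet> y) + q\<^sup>2 * (y \<bullet> y)"
    by (simp add: inner_add_left inner_add_right inner_commute power2_eq_square algebra_simps)
  also have "\<dots> = (norm x)\<^sup>2 * (p\<^sup>2 + q\<^sup>2 + p * q)"
    using \<open>x \<bullet> y = (norm x)\<^sup>2 / 2\<close> assms(1)
    by (simp add: power2_norm_eq_inner[symmetric] algebra_simps)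
  finally show ?thesis .
qed

(* Body k moves along P with phase H k, and R is the reflection in the axis of symmetry.  A plays
   the role of the second derivative of P, but only its symmetry is needed; c is the total mass
   times the centre of mass, which is no longer 0 after the change of coordinates. *)
locale symmetric_choreography = force_law F
  for F :: "real \<Rightarrow> real" +
  fixes I :: "'i set" and m H :: "'i \<Rightarrow> real" and P A :: "real \<Rightarrow> 'a::real_inner"
    and R :: "'a \<Rightarrow> 'a" and c :: 'a and T :: real
  assumes finite_bodies: "finite I" and bodies_nonempty: "I \<noteq> {}"
    and mass_pos: "k \<in> I \<Longrightarrow> 0 < m k"
    and continuous_P: "continuous_on UNIV P"
    and period_pos: "0 < T" and periodic_P: "P (t + T) = P t"
    and linear_R: "linear R" and R_R: "R (R x) = x" and norm_R: "norm (R x) = norm x"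
    and P_symmetric: "P (- t) = R (P t)" and A_symmetric: "A (- t) = R (A t)"
    and motion: "k \<in> I \<Longrightarrow>
      A (t + H k) = (\<Sum>j\<in>I - {k}. m j *\<^sub>R central_force F (P (t + H j) - P (t + H k)))"
    and center_of_mass: "(\<Sum>k\<in>I. m k *\<^sub>R P (t + H k)) = c"
    and no_collision: "j \<in> I \<Longrightarrow> k \<in> I \<Longrightarrow> j \<noteq> k \<Longrightarrow> P (t + H j) \<noteq> P (t + H k)"
begin

lemma R_P: "R (P t) = P (- t)"
  using P_symmetric[of "- t"] by (simp add: R_R)

lemma R_weighted_sum: "R (\<Sum>k\<in>I. m k *\<^sub>R f k) = (\<Sum>k\<in>I. m k *\<^sub>R R (f k))"
  by (simp add: linear_sum[OF linear_R] linear_scale[OF linear_R] o_def)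

lemma total_mass_pos: "0 < sum m I"
  using finite_bodies bodies_nonempty mass_pos by (simp add: sum_pos)

lemma continuous_chord: "continuous_on UNIV (\<lambda>s. chord P s d)"
  unfolding chord_def by (intro continuous_intros continuous_on_compose2[OF continuous_P]) auto

lemma periodic_chord: "chord P (s + T) d = chord P s d"
  using periodic_P[of "s + d"] periodic_P[of s] by (simp add: chord_def add_ac)

lemma exists_equal_opposite_chords: "\<exists>s. norm (chord P s (- d)) = norm (chord P s d)"
proof -
  have "continuous_on UNIV (\<lambda>s. norm (chord P s d))"
    using continuous_chord by (intro continuous_intros)
  from continuous_periodic_shift_meets[OF this period_pos, of d]
  obtain s where "norm (chord P (s + d) d) = norm (chord P s d)"
    by (auto simp: periodic_chord)
  then have "norm (chord P (s + d) (- d)) = norm (chord P (s + d) d)"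
    by (simp add: chord_def norm_minus_commute)
  then show ?thesis by blast
qed

lemma chord_nonzero: "j \<in> I \<Longrightarrow> k \<in> I \<Longrightarrow> j \<noteq> k \<Longrightarrow> chord P s (H j - H k) \<noteq> 0"
  using no_collision[of j k "s - H k"] by (simp add: chord_def algebra_simps)

lemma chord_balance:
  assumes "k \<in> I"
  shows "(\<Sum>j\<in>I - {k}. m j *\<^sub>R chord P s (H j - H k)) = c - sum m I *\<^sub>R P s"
proof -
  have "(\<Sum>j\<in>I - {k}. m j *\<^sub>R chord P s (H j - H k)) = (\<Sum>j\<in>I. m j *\<^sub>R chord P s (H j - H k))"
    using finite_bodies assms by (intro sum.mono_neutral_left) (auto simp: chord_def)
  also have "\<dots> = (\<Sum>j\<in>I. m j *\<^sub>R P (s - H k + H j)) - sum m I *\<^sub>R P s"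
    by (simp add: chord_def scaleR_diff_right sum_subtractf scaleR_sum_left algebra_simps)
  finally show ?thesis by (simp only: center_of_mass)
qed

lemma force_balance:
  assumes "k \<in> I"
  shows "(\<Sum>j\<in>I - {k}. m j *\<^sub>R central_force F (chord P s (H j - H k))) = A s"
  using motion[OF assms, of "s - H k"] by (simp add: chord_def algebra_simps)

(* Weighting center_of_mass at the phases -H i by m i gives a double sum which the reflection
   transposes. *)
lemma R_fixes_center: "R c = c"
proof -
  have c: "c = (\<Sum>k\<in>I. m k *\<^sub>R P (H k - H i))" for i
    using center_of_mass[of "- H i"] by simp
  have Rc: "R c = (\<Sum>k\<in>I. m k *\<^sub>R P (H i - H k))" for i
    using arg_cong[OF center_of_mass[of "- H i"], of R] by (simp add: R_weighted_sum R_P)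
  have "sum m I *\<^sub>R R c = (\<Sum>i\<in>I. m i *\<^sub>R R c)"
    by (simp add: scaleR_sum_left)
  also have "\<dots> = (\<Sum>i\<in>I. \<Sum>k\<in>I. (m i * m k) *\<^sub>R P (H i - H k))"
  proof (rule sum.cong[OF refl])
    fix i show "m i *\<^sub>R R c = (\<Sum>k\<in>I. (m i * m k) *\<^sub>R P (H i - H k))"
      by (simp add: Rc[of i] scaleR_sum_right)
  qed
  also have "\<dots> = (\<Sum>k\<in>I. \<Sum>i\<in>I. (m i * m k) *\<^sub>R P (H i - H k))"
    by (rule sum.swap)
  also have "\<dots> = (\<Sum>k\<in>I. m k *\<^sub>R c)"
  proof (rule sum.cong[OF refl])
    fix k show "(\<Sum>i\<in>I. (m i * m k) *\<^sub>R P (H i - H k)) = m k *\<^sub>R c"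
      by (simp add: c[of k] scaleR_sum_right mult.commute)
  qed
  also have "\<dots> = sum m I *\<^sub>R c"
    by (simp add: scaleR_sum_left)
  finally show ?thesis using total_mass_pos by simp
qed

lemma time_reversal: "symmetric_choreography F I m (\<lambda>k. - H k) P A R (R c) T"
proof unfold_locales
  fix t k assume "k \<in> I"
  have "A (t + - H k) = R (\<Sum>j\<in>I - {k}. m j *\<^sub>R central_force F (P (- t + H j) - P (- t + H k)))"
    using A_symmetric[of "- t + H k"] motion[OF \<open>k \<in> I\<close>, of "- t"] by simp
  also have "\<dots> = (\<Sum>j\<in>I - {k}. m j *\<^sub>R central_force F (P (t + - H j) - P (t + - H k)))"
    by (simp add: linear_sum[OF linear_R] linear_scale[OF linear_R] linear_diff[OF linear_R]
        central_force_linear_isometry[OF linear_R norm_R, symmetric] R_P o_def)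
  finally show "A (t + - H k) = \<dots>" .
next
  fix t
  show "(\<Sum>k\<in>I. m k *\<^sub>R P (t + - H k)) = R c"
    using R_weighted_sum[of "\<lambda>k. P (- t + H k)"] center_of_mass[of "- t"] by (simp add: R_P)
next
  fix t j k assume "j \<in> I" "k \<in> I" "j \<noteq> k"
  then show "P (t + - H j) \<noteq> P (t + - H k)"
    using no_collision[of j k "- t"] R_P by (metis minus_add_distrib minus_minus uminus_add_conv_diff)
qed (simp_all add: finite_bodies bodies_nonempty mass_pos continuous_P period_pos periodic_P
    linear_add[OF linear_R] linear_scale[OF linear_R] R_R norm_R P_symmetric A_symmetric)

lemma chord_balance_reversed:
  assumes "k \<in> I"
  shows "(\<Sum>j\<in>I - {k}. m j *\<^sub>R chord P s (H k - H j)) = c - sum m I *\<^sub>R P s"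
  using symmetric_choreography.chord_balance[OF time_reversal assms] by (simp add: R_fixes_center)

lemma force_balance_reversed:
  assumes "k \<in> I"
  shows "(\<Sum>j\<in>I - {k}. m j *\<^sub>R central_force F (chord P s (H k - H j))) = A s"
  using symmetric_choreography.force_balance[OF time_reversal assms] by simp

end

locale symmetric_three_body_choreography = symmetric_choreography +
  assumes three_bodies: "card I = 3"
begin

lemma three_body_time_reversal:
  "symmetric_three_body_choreography F I m (\<lambda>k. - H k) P A R (R c) T"
  using time_reversal three_bodies
  by (simp add: symmetric_three_body_choreography_def symmetric_three_body_choreography_axioms_def)

lemma other_bodies:
  assumes "i \<in> I" "j \<in> I" "k \<in> I" "distinct [i, j, k]"
  shows "I - {i} = {j, k}"
proof -
  have "{i, j, k} = I"
    using assms three_bodies finite_bodies by (intro card_subset_eq) auto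
  then show ?thesis using assms by auto
qed

lemma chord_triple_balance:
  assumes "i \<in> I" "j \<in> I" "k \<in> I" "distinct [i, j, k]"
  shows "m j *\<^sub>R (chord P s (H j - H i) - chord P s (H k - H j)) = (m i - m k) *\<^sub>R chord P s (H k - H i)"
    and "m j *\<^sub>R (central_force F (chord P s (H j - H i)) - central_force F (chord P s (H k - H j))) =
      (m i - m k) *\<^sub>R central_force F (chord P s (H k - H i))"
proof -
  have "I - {i} = {j, k}" "I - {k} = {i, j}"
    using other_bodies assms by (auto simp: insert_commute)
  then have "m j *\<^sub>R chord P s (H j - H i) + m k *\<^sub>R chord P s (H k - H i) =
      m i *\<^sub>R chord P s (H k - H i) + m j *\<^sub>R chord P s (H k - H j)"
    and "m j *\<^sub>R central_force F (chord P s (H j - H i)) + m k *\<^sub>R central_force F (chord P s (H k - H i)) =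
      m i *\<^sub>R central_force F (chord P s (H k - H i)) + m j *\<^sub>R central_force F (chord P s (H k - H j))"
    using chord_balance[OF \<open>i \<in> I\<close>, of s] chord_balance_reversed[OF \<open>k \<in> I\<close>, of s]
      force_balance[OF \<open>i \<in> I\<close>, of s] force_balance_reversed[OF \<open>k \<in> I\<close>, of s] assms(4)
    by auto
  then show "m j *\<^sub>R (chord P s (H j - H i) - chord P s (H k - H j)) = (m i - m k) *\<^sub>R chord P s (H k - H i)"
    and "m j *\<^sub>R (central_force F (chord P s (H j - H i)) - central_force F (chord P s (H k - H j))) =
      (m i - m k) *\<^sub>R central_force F (chord P s (H k - H i))"
    by (simp_all add: algebra_simps)
qed

lemma chord_triple_balance_reversed:
  assumes "i \<in> I" "j \<in> I" "k \<in> I" "distinct [i, j, k]"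
  shows "m j *\<^sub>R (chord P s (H i - H j) - chord P s (H j - H k)) = (m i - m k) *\<^sub>R chord P s (H i - H k)"
  using symmetric_three_body_choreography.chord_triple_balance(1)[OF three_body_time_reversal assms]
  by simp

lemma chords_coincide_if_masses_equal:
  assumes "i \<in> I" "j \<in> I" "k \<in> I" "distinct [i, j, k]" "m i = m k"
  shows "chord P s (H k - H j) = chord P s (H j - H i)"
    and "chord P s (H j - H k) = chord P s (H i - H j)"
  using chord_triple_balance(1)[OF assms(1-4), of s] chord_triple_balance_reversed[OF assms(1-4), of s]
    assms(5) mass_pos[OF \<open>j \<in> I\<close>]
  by simp_all

lemma chords_norms_equal_or_aligned:
  assumes "i \<in> I" "j \<in> I" "k \<in> I" "distinct [i, j, k]" "m i \<noteq> m k"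
  shows "norms_equal_or_aligned (chord P s (H j - H i)) (chord P s (H k - H i)) (chord P s (H k - H j))"
  using assms mass_pos[OF \<open>j \<in> I\<close>] chord_nonzero
  by (intro balanced_forces_norms_equal_or_aligned[OF _ _ _ _ _ chord_triple_balance[OF assms(1-4)]]) auto

lemma chords_norms_equal_or_aligned_reversed:
  assumes "i \<in> I" "j \<in> I" "k \<in> I" "distinct [i, j, k]" "m i \<noteq> m k"
  shows "norms_equal_or_aligned (chord P s (H i - H j)) (chord P s (H i - H k)) (chord P s (H j - H k))"
  using symmetric_three_body_choreography.chords_norms_equal_or_aligned[OF three_body_time_reversal assms]
  by simp

(* Seen from body i at time s and from body j at time s + a, c - M P is a combination of two sides
   of the same equilateral triangle, with coefficients (m j, m k) resp. (m i, m k).  A continuous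
   periodic function takes equal values at some s and s + a. *)
lemma equal_masses_if_equilateral:
  assumes "i \<in> I" "j \<in> I" "k \<in> I" "distinct [i, j, k]"
    and "\<And>s. norm (chord P s (H j - H i)) = norm (chord P s (H k - H i))"
    and "\<And>s. norm (chord P s (H k - H j)) = norm (chord P s (H i - H j))"
  shows "m i = m j"
proof -
  define a where "a = H j - H i"
  define \<psi> where "\<psi> s = (norm (c - sum m I *\<^sub>R P s))\<^sup>2" for s
  have \<psi>: "\<psi> s = (norm (chord P s a))\<^sup>2 * ((m j)\<^sup>2 + (m k)\<^sup>2 + m j * m k)"
    "\<psi> (s + a) = (norm (chord P s a))\<^sup>2 * ((m i)\<^sup>2 + (m k)\<^sup>2 + m i * m k)" for s
  proof -
    define x y where "x = chord P s a" and "y = chord P s (H k - H i)"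
    have "chord P (s + a) (H i - H j) = - x" "chord P (s + a) (H k - H j) = y - x"
      by (simp_all add: x_def y_def a_def chord_def algebra_simps)
    then have "norm y = norm x" "norm (y - x) = norm x"
      using assms(5)[of s] assms(6)[of "s + a"] by (simp_all add: x_def y_def a_def)
    moreover have "I - {i} = {j, k}" "I - {j} = {i, k}"
      using other_bodies assms(1-4) by (auto simp: insert_commute)
    then have "c - sum m I *\<^sub>R P s = m j *\<^sub>R x + m k *\<^sub>R y"
      "c - sum m I *\<^sub>R P (s + a) = m i *\<^sub>R (- x) + m k *\<^sub>R (y - x)"
      using chord_balance[OF \<open>i \<in> I\<close>, of s] chord_balance[OF \<open>j \<in> I\<close>, of "s + a"] assms(4)
        \<open>chord P (s + a) (H i - H j) = - x\<close> \<open>chord P (s + a) (H k - H j) = y - x\<close>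
      by (simp_all add: x_def y_def a_def)
    ultimately show "\<psi> s = (norm x)\<^sup>2 * ((m j)\<^sup>2 + (m k)\<^sup>2 + m j * m k)"
      "\<psi> (s + a) = (norm x)\<^sup>2 * ((m i)\<^sup>2 + (m k)\<^sup>2 + m i * m k)"
      using norm_combination_equilateral[of y x] norm_combination_equilateral[of "y - x" "- x"]
      unfolding \<psi>_def by simp_all
  qed
  have "continuous_on UNIV \<psi>"
    unfolding \<psi>_def by (intro continuous_intros continuous_P)
  moreover have "\<psi> (t + T) = \<psi> t" for t by (simp add: \<psi>_def periodic_P)
  ultimately obtain s where "\<psi> (s + a) = \<psi> s"
    using continuous_periodic_shift_meets period_pos by blast
  moreover have "chord P s a \<noteq> 0"
    using chord_nonzero[of j i] assms(1,2,4) by (auto simp: a_def)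
  ultimately have "(m i)\<^sup>2 + (m k)\<^sup>2 + m i * m k = (m j)\<^sup>2 + (m k)\<^sup>2 + m j * m k"
    using \<psi>[of s] by simp
  then have "(m i - m j) * (m i + m j + m k) = 0"
    by (simp add: power2_eq_square algebra_simps)
  then show ?thesis
    using mass_pos[of i] mass_pos[of j] mass_pos[of k] assms(1-3) by auto
qed

lemma pairwise_distinct_masses_impossible:
  assumes "i \<in> I" "j \<in> I" "k \<in> I" "distinct [i, j, k]" "distinct [m i, m j, m k]"
  shows False
proof -
  have "norm (chord P s (H j - H i)) = norm (chord P s (H k - H i)) \<and>
      norm (chord P s (H k - H j)) = norm (chord P s (H i - H j))" for s
    using norms_equal_around_hexagon[OF
        chords_norms_equal_or_aligned[of i j k] chords_norms_equal_or_aligned_reversed[of k i j]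
        chords_norms_equal_or_aligned[of j k i] chords_norms_equal_or_aligned_reversed[of i j k]
        chords_norms_equal_or_aligned[of k i j] chords_norms_equal_or_aligned_reversed[of j k i]
        chord_nonzero[of j i]] assms
    by auto
  then have "m i = m j"
    using equal_masses_if_equilateral[OF assms(1-4)] by blast
  with assms(5) show False by simp
qed

lemma two_equal_masses_chord_dichotomy:
  fixes s :: real
  assumes "i \<in> I" "j \<in> I" "k \<in> I" "distinct [i, j, k]" "m i = m k" "m j \<noteq> m i"
  defines "u \<equiv> chord P s (H i - H j)" and "v \<equiv> chord P s (H j - H i)" and "w \<equiv> chord P s (H k - H i)"
  shows "(norm u = norm v \<and> norm v = norm w) \<or> (\<bar>u \<bullet> v\<bar> = norm u * norm v \<and> norm u \<noteq> norm v)"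
    and "\<not> (norm u = norm v \<and> norm v = norm w \<and> \<bar>u \<bullet> v\<bar> = norm u * norm v)"
proof -
  have "distinct [j, k, i]" using assms(4) by auto
  have "chord P s (H j - H k) = u"
    using chords_coincide_if_masses_equal(2)[OF assms(1-5)] by (simp add: u_def)
  then have "norms_equal_or_aligned u v w"
    using chords_norms_equal_or_aligned_reversed[OF assms(2,3,1) \<open>distinct [j, k, i]\<close> assms(6), of s]
    by (simp add: v_def w_def)
  then show "(norm u = norm v \<and> norm v = norm w) \<or> (\<bar>u \<bullet> v\<bar> = norm u * norm v \<and> norm u \<noteq> norm v)"
    unfolding norms_equal_or_aligned_def by (auto simp: abs_mult power2_norm_eq_inner[symmetric] power2_eq_square)
  show "\<not> (norm u = norm v \<and> norm v = norm w \<and> \<bar>u \<bullet> v\<bar> = norm u * norm v)"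
  proof
    assume eqs: "norm u = norm v \<and> norm v = norm w \<and> \<bar>u \<bullet> v\<bar> = norm u * norm v"
    have "u \<noteq> 0" using chord_nonzero assms(1,2,4) by (auto simp: u_def)
    have "norm u *\<^sub>R v = norm u *\<^sub>R u \<or> norm u *\<^sub>R v = norm u *\<^sub>R (- u)"
      using eqs norm_cauchy_schwarz_abs_eq[of u v] by auto
    then have "v = u \<or> v = - u"
      using \<open>u \<noteq> 0\<close> by (simp del: scaleR_minus_right)
    moreover have "v \<noteq> u"
    proof -
      have "v = chord P s (H k - H j)"
        using chords_coincide_if_masses_equal(1)[OF assms(1-5)] by (simp add: v_def)
      moreover have "chord P s (H k - H j) \<noteq> chord P s (H i - H j)"
        using no_collision[of k i "s - H j"] assms(1,3,4) by (auto simp: chord_def algebra_simps)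
      ultimately show ?thesis by (simp add: u_def)
    qed
    moreover have "m k *\<^sub>R (u - w) = (m j - m i) *\<^sub>R v"
      using chord_triple_balance_reversed[OF assms(2,3,1) \<open>distinct [j, k, i]\<close>, of s]
        \<open>chord P s (H j - H k) = u\<close> by (simp add: v_def w_def)
    ultimately have "m k *\<^sub>R w = m j *\<^sub>R u"
      using assms(5) by (simp add: algebra_simps)
    then have "m k * norm w = m j * norm u"
      using mass_pos assms(2,3) by (metis abs_of_pos norm_scaleR)
    then have "m k = m j" using eqs \<open>u \<noteq> 0\<close> by auto
    with assms(5,6) show False by simp
  qed
qed

(* The instants at which u, v, w have equal norms and those at which u, v are collinear form two
   disjoint closed sets covering the connected real line. *)
lemma two_equal_masses_imply_all_equal:
  assumes "i \<in> I" "j \<in> I" "k \<in> I" "distinct [i, j, k]" "m i = m k"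
  shows "m j = m i"
proof (rule ccontr)
  assume "m j \<noteq> m i"
  define u v w where "u s = chord P s (H i - H j)" and "v s = chord P s (H j - H i)"
    and "w s = chord P s (H k - H i)" for s
  define Eqs where "Eqs = {s. norm (u s) = norm (v s) \<and> norm (v s) = norm (w s)}"
  define Col where "Col = {s. \<bar>u s \<bullet> v s\<bar> = norm (u s) * norm (v s)}"
  note dichotomy = two_equal_masses_chord_dichotomy[OF assms \<open>m j \<noteq> m i\<close>]
  have "continuous_on UNIV u" "continuous_on UNIV v" "continuous_on UNIV w"
    by (simp_all add: u_def v_def w_def continuous_chord)
  then have "closed Eqs" "closed Col"
    unfolding Eqs_def Col_def by (intro closed_Collect_conj closed_Collect_eq continuous_intros; simp)+
  moreover have "UNIV \<subseteq> Eqs \<union> Col" "Eqs \<inter> Col = {}"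
    using dichotomy by (auto simp: Eqs_def Col_def u_def v_def w_def)
  moreover have "Eqs \<noteq> {}"
  proof -
    obtain s where "norm (u s) = norm (v s)"
      using exists_equal_opposite_chords[of "H j - H i"] by (auto simp: u_def v_def)
    then have "s \<in> Eqs"
      using dichotomy(1)[of s] by (auto simp: Eqs_def u_def v_def w_def)
    then show ?thesis by blast
  qed
  ultimately have "Col = {}"
    using connected_closed[of "UNIV :: real set"] by auto
  then have "norm (u s) = norm (v s) \<and> norm (v s) = norm (w s)" for s
    using \<open>UNIV \<subseteq> Eqs \<union> Col\<close> by (auto simp: Eqs_def)
  moreover have "chord P s (H k - H j) = v s" for s
    using chords_coincide_if_masses_equal(1)[OF assms] by (simp add: v_def)
  ultimately have "m i = m j"
    using equal_masses_if_equilateral[OF assms(1-4)] by (simp add: u_def v_def w_def)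
  with \<open>m j \<noteq> m i\<close> show False by simp
qed

lemma masses_equal:
  assumes "i \<in> I" "j \<in> I"
  shows "m i = m j"
proof (rule ccontr)
  assume "m i \<noteq> m j"
  then have "i \<noteq> j" by auto
  then have "card (I - {i, j}) = 1"
    using assms three_bodies finite_bodies by (subst card_Diff_subset) auto
  then obtain k where "k \<in> I" "k \<noteq> i" "k \<noteq> j"
    by (metis One_nat_def card_Suc_eq Diff_iff insertI1 insert_iff)
  then have ijk: "distinct [i, j, k]" "distinct [j, i, k]" using \<open>m i \<noteq> m j\<close> by auto
  consider "m k = m i" | "m k = m j" | "distinct [m i, m j, m k]"
    using \<open>m i \<noteq> m j\<close> by force
  then show False
  proof cases
    case 1
    then show False
      using two_equal_masses_imply_all_equal[OF assms \<open>k \<in> I\<close> ijk(1)] \<open>m i \<noteq> m j\<close> by simp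
  next
    case 2
    then show False
      using two_equal_masses_imply_all_equal[OF assms(2,1) \<open>k \<in> I\<close> ijk(2)] \<open>m i \<noteq> m j\<close> by simp
  next
    case 3
    then show False
      using pairwise_distinct_masses_impossible[OF assms \<open>k \<in> I\<close> ijk(1)] by simp
  qed
qed

end

lemma shifted_second_derivative:
  assumes "\<And>t. (p has_vector_derivative p' t) (at t)" "\<And>t. (p' has_vector_derivative p'' t) (at t)"
    and "\<And>t. q t = p (t + h)"
    and "\<And>t. (q has_vector_derivative v t) (at t)" "\<And>t. (v has_vector_derivative a t) (at t)"
  shows "a t = p'' (t + h)"
proof -
  have q: "q = (\<lambda>t. p (t + h))" using assms(3) by blast
  have "v s = p' (s + h)" for s
    using vector_derivative_unique_at[OF assms(4)[of s, unfolded q]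
        has_vector_derivative_linear_shift[OF assms(1) bounded_linear_ident]] .
  then have "v = (\<lambda>t. p' (t + h))" by blast
  show ?thesis
    using vector_derivative_unique_at[OF assms(5)[of t, unfolded \<open>v = _\<close>]
        has_vector_derivative_linear_shift[OF assms(2) bounded_linear_ident]] .
qed

lemma axis_symmetric_C2_periodic_coordinates:
  assumes "C2_periodic p" and "axis_symmetric p"
  obtains T p' p'' L s b where "0 < T" "\<And>t. p (t + T) = p t"
    "\<And>t. (p has_vector_derivative p' t) (at t)" "\<And>t. (p' has_vector_derivative p'' t) (at t)"
    "linear L" "\<And>x. norm (L x) = norm x"
    "\<And>t. L (p (- t + s)) + b = refl_axis (L (p (t + s)) + b)"
    "\<And>t. L (p'' (- t + s)) = refl_axis (L (p'' (t + s)))"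
proof -
  obtain p' p'' T where "0 < T" "\<And>t. p (t + T) = p t"
    and p': "\<And>t. (p has_vector_derivative p' t) (at t)"
    and p'': "\<And>t. (p' has_vector_derivative p'' t) (at t)"
    using assms(1) unfolding C2_periodic_def by blast
  obtain g s where iso: "\<And>x y. dist (g x) (g y) = dist x y"
    and sym: "\<And>t. g (p (- t + s)) = refl_axis (g (p (t + s)))"
    using assms(2) unfolding axis_symmetric_def by blast
  define L where "L x = g x - g 0" for x
  have "dist (L x) (L y) = dist x y" for x y
    using iso[of x y] by (simp add: L_def dist_norm)
  then have "linear L" by (intro isometry_linear) (simp_all add: L_def)
  have norm_L: "norm (L x) = norm x" for x
    using iso[of x 0] by (simp add: L_def dist_norm)
  have bl: "bounded_linear L" "bounded_linear refl_axis"
    using \<open>linear L\<close> linear_refl_axis by (simp_all add: linear_conv_bounded_linear)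
  have P': "((\<lambda>t. L (p (t + s)) + g 0) has_vector_derivative L (p' (t + s))) (at t)" for t
    using has_vector_derivative_linear_shift[OF p' bl(1)] by (rule has_vector_derivative_add_const[THEN iffD2])
  have P'': "((\<lambda>t. L (p' (t + s))) has_vector_derivative L (p'' (t + s))) (at t)" for t
    using has_vector_derivative_linear_shift[OF p'' bl(1)] .
  have P_sym: "L (p (- t + s)) + g 0 = refl_axis (L (p (t + s)) + g 0)" for t
    using sym[of t] by (simp add: L_def)
  have "L (p'' (- t + s)) = refl_axis (L (p'' (t + s)))" for t
    using second_derivative_reflection_symmetric[where f = "\<lambda>t. L (p (t + s)) + g 0"
        and f' = "\<lambda>t. L (p' (t + s))" and f'' = "\<lambda>t. L (p'' (t + s))", OF P' P'' P_sym bl(2)]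
    by simp
  from that[of T p' p'' L s "g 0", OF \<open>0 < T\<close> \<open>\<And>t. p (t + T) = p t\<close> p' p'' \<open>linear L\<close> norm_L P_sym this]
  show ?thesis .
qed

lemma three_body_choreography_in_symmetric_coordinates:
  fixes m :: "nat \<Rightarrow> real" and q a :: "nat \<Rightarrow> real \<Rightarrow> real^2"
  assumes "force_law f" and m_pos: "\<forall>k\<in>{1,2,3}. m k > 0"
    and T: "0 < T" "\<And>t. p (t + T) = p t" and p': "\<And>t. (p has_vector_derivative p' t) (at t)"
    and L: "linear L" "\<And>x. norm (L x) = norm x"
    and P_sym: "\<And>t. L (p (- t + s)) + b = refl_axis (L (p (t + s)) + b)"
    and A_sym: "\<And>t. L (p'' (- t + s)) = refl_axis (L (p'' (t + s)))"
    and q: "\<And>k t. k \<in> {1,2,3} \<Longrightarrow> q k t = p (t + h k)"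
    and a: "\<And>k t. k \<in> {1,2,3} \<Longrightarrow> a k t = p'' (t + h k)"
    and no_collision: "\<forall>j\<in>{1,2,3}. \<forall>k\<in>{1,2,3}. j \<noteq> k \<longrightarrow> (\<forall>t. q j t \<noteq> q k t)"
    and eqn: "\<forall>k\<in>{1,2,3}. \<forall>t. a k t =
               (\<Sum>j\<in>{1,2,3} - {k}. (m j * f ((norm (q j t - q k t))\<^sup>2)) *\<^sub>R (q j t - q k t))"
    and com: "\<forall>t. (\<Sum>k\<in>{1,2,3}. m k *\<^sub>R q k t) = 0"
  shows "symmetric_three_body_choreography f {1,2,3} m (\<lambda>k. h k - s) (\<lambda>t. L (p (t + s)) + b)
    (\<lambda>t. L (p'' (t + s))) refl_axis ((\<Sum>k\<in>{1,2,3}. m k) *\<^sub>R b) T"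
proof -
  define P where "P t = L (p (t + s)) + b" for t
  have bl: "bounded_linear L" using L(1) by (simp add: linear_conv_bounded_linear)
  have L_chord: "P (t + (h j - s)) - P (t + (h k - s)) = L (q j t - q k t)"
    if "j \<in> {1,2,3}" "k \<in> {1,2,3}" for j k t
    using q that by (simp add: P_def linear_diff[OF L(1)])
  have "symmetric_three_body_choreography f {1,2,3} m (\<lambda>k. h k - s) P (\<lambda>t. L (p'' (t + s)))
      refl_axis ((\<Sum>k\<in>{1,2,3}. m k) *\<^sub>R b) T"
  proof (intro symmetric_three_body_choreography.intro symmetric_choreography.intro
      symmetric_choreography_axioms.intro symmetric_three_body_choreography_axioms.intro)
    show "continuous_on UNIV P"
      unfolding P_def using has_vector_derivative_linear_shift[OF p' bl]
      by (intro continuous_at_imp_continuous_on ballI continuous_intros has_vector_derivative_continuous)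
        blast
  next
    fix k :: nat and t assume k: "k \<in> {1,2,3}"
    have "L (p'' (t + (h k - s) + s)) = L (a k t)" using a[OF k] by simp
    also have "\<dots> = (\<Sum>j\<in>{1,2,3} - {k}. m j *\<^sub>R central_force f (L (q j t - q k t)))"
      using eqn[rule_format, OF k]
      by (simp add: linear_sum[OF L(1)] linear_scale[OF L(1)] central_force_def L(2) o_def)
    finally show "L (p'' (t + (h k - s) + s)) = (\<Sum>j\<in>{1,2,3} - {k}.
        m j *\<^sub>R central_force f (P (t + (h j - s)) - P (t + (h k - s))))"
      using k L_chord by simp
  next
    fix t
    have "(\<Sum>k\<in>{1,2,3}. m k *\<^sub>R P (t + (h k - s))) =
        L (\<Sum>k\<in>{1,2,3}. m k *\<^sub>R q k t) + (\<Sum>k\<in>{1,2,3}. m k) *\<^sub>R b"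
      using q by (simp add: P_def linear_add[OF L(1)] linear_scale[OF L(1)] algebra_simps)
    then show "(\<Sum>k\<in>{1,2,3}. m k *\<^sub>R P (t + (h k - s))) = (\<Sum>k\<in>{1,2,3}. m k) *\<^sub>R b"
      using com linear_0[OF L(1)] by simp
  next
    fix j k :: nat and t assume "j \<in> {1,2,3}" "k \<in> {1,2,3}" "j \<noteq> k"
    then show "P (t + (h j - s)) \<noteq> P (t + (h k - s))"
      using L_chord[of j k t] no_collision L(2)[of "q j t - q k t"] by auto
  next
    show "k \<in> {1,2,3} \<Longrightarrow> 0 < m k" for k :: nat using m_pos by blast
  next
    show "P (t + T) = P t" for t using T(2)[of "t + s"] by (simp add: P_def add_ac)
  qed (use \<open>force_law f\<close> T(1) P_sym A_sym in \<open>simp_all add: P_def linear_refl_axis\<close>)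
  then show ?thesis by (simp only: P_def[abs_def])
qed

theorem theorem2:
  fixes m :: "nat \<Rightarrow> real" and q v a :: "nat \<Rightarrow> real \<Rightarrow> real^2" and f :: "real \<Rightarrow> real"
  assumes m_pos: "\<forall>k\<in>{1,2,3}. m k > 0"
    and f_pos: "\<forall>x>0. f x > 0"
    and f_dec: "\<forall>x y. 0 < x \<longrightarrow> x < y \<longrightarrow> sqrt y * f y < sqrt x * f x"
    and no_collision: "\<forall>j\<in>{1,2,3}. \<forall>k\<in>{1,2,3}. j \<noteq> k \<longrightarrow> (\<forall>t. q j t \<noteq> q k t)"
    and vel: "\<forall>k\<in>{1,2,3}. \<forall>t. (q k has_vector_derivative v k t) (at t)"
    and acc: "\<forall>k\<in>{1,2,3}. \<forall>t. (v k has_vector_derivative a k t) (at t)"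
    and eqn: "\<forall>k\<in>{1,2,3}. \<forall>t. a k t =
               (\<Sum>j\<in>{1,2,3} - {k}. (m j * f ((norm (q j t - q k t))\<^sup>2)) *\<^sub>R (q j t - q k t))"
    and com: "\<forall>t. (\<Sum>k\<in>{1,2,3}. m k *\<^sub>R q k t) = 0"
    and choreo: "choreographic q p"
    and sym: "axis_symmetric p"
  shows "m 1 = m 2 \<and> m 2 = m 3"
proof -
  have "force_law f" using f_pos f_dec by unfold_locales auto
  obtain h where q: "\<And>k t. k \<in> {1,2,3} \<Longrightarrow> q k t = p (t + h k)"
    using choreo unfolding choreographic_def by blast
  have "C2_periodic p" using choreo by (simp add: choreographic_def)
  obtain T p' p'' L s b where T: "0 < T" "\<And>t. p (t + T) = p t"
    and p': "\<And>t. (p has_vector_derivative p' t) (at t)"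
    and p'': "\<And>t. (p' has_vector_derivative p'' t) (at t)"
    and L: "linear L" "\<And>x. norm (L x) = norm x"
    and P_sym: "\<And>t. L (p (- t + s)) + b = refl_axis (L (p (t + s)) + b)"
    and A_sym: "\<And>t. L (p'' (- t + s)) = refl_axis (L (p'' (t + s)))"
    using axis_symmetric_C2_periodic_coordinates[OF \<open>C2_periodic p\<close> sym] by blast
  have a: "a k t = p'' (t + h k)" if "k \<in> {1,2,3}" for k t
    using shifted_second_derivative[OF p' p'', where q = "q k" and v = "v k"] q vel acc that
    by blast
  have "symmetric_three_body_choreography f {1,2,3} m (\<lambda>k. h k - s) (\<lambda>t. L (p (t + s)) + b)
      (\<lambda>t. L (p'' (t + s))) refl_axis ((\<Sum>k\<in>{1,2,3}. m k) *\<^sub>R b) T"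
    using three_body_choreography_in_symmetric_coordinates[where p = p and p'' = p'' and L = L
        and s = s and b = b and q = q and a = a and h = h]
      \<open>force_law f\<close> m_pos T p' L P_sym A_sym q a no_collision eqn com by blast
  from symmetric_three_body_choreography.masses_equal[OF this] show ?thesis by simp
qed

end
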